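(* Let $k\ge 1$ be an integer and let $\vec G=(V,\vec E)$ be a directed graph whose underlying undirected graph $G=(V,E)$ has an $f$-weighted $\beta$-orientation for every mapping $f:E\to\mathbb{Z}_{2k+1}\setminus\{0\}$ and every $\mathbb{Z}_{2k+1}$-boundary $\beta$. For every arc $\vec e\in\vec E$, let $L(\vec e)$ be a set of two distinct elements of $\mathbb{Z}_{2k+1}$. Then for every $\mathbb{Z}_{2k+1}$-boundary $\beta$, $\vec G$ has a $\mathbb{Z}_{2k+1}$-flow $g$ with boundary $\beta$ such that $g(\vec e)\in L(\vec e)$ for every $\vec e\in\vec E$.
   Context: Graphs are finite and may have multiple edges but no loops. A $\mathbb{Z}_m$-boundary is a map $\beta:V\to\mathbb{Z}_m$ with $\sum_{v\in V}\beta(v)\equiv0\pmod m$. For an orientation (or directed graph) $\vec G$ and $v\in V$, $\delta^+_{\vec G}(v)$ (resp. $\delta^-_{\vec G}(v)$) is the set of arcs leaving (resp. entering) $v$, and for a weight map $h$ on edges/arcs, $\partial h(v)=\sum_{\vec e\in\delta^+_{\vec G}(v)}h(e)-\sum_{\vec e\in\delta^-_{\vec G}(v)}h(e)$. Given $f:E\to\mathbb{Z}_m$, an orientation of $G$ is an $f$-weighted $\beta$-orientation if $\partial f(v)\equiv\beta(v)\pmod m$ for all $v$. A $\mathbb{Z}_m$-flow with boundary $\beta$ in $\vec G$ is a map $g:\vec E\to\mathbb{Z}_m$ with $\partial g(v)\equiv\beta(v)\pmod m$ for all $v$. *)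

theory Defs
  imports "HOL-Number_Theory.Cong"
begin

text \<open>Its underlying undirected graph has the same edge set E.\<close>

definition multidigraph :: "'v set \<Rightarrow> 'e set \<Rightarrow> ('e \<Rightarrow> 'v) \<Rightarrow> ('e \<Rightarrow> 'v) \<Rightarrow> bool" where
  "multidigraph V E tail head \<longleftrightarrow> finite V \<and> finite E \<and>
     (\<forall>e\<in>E. tail e \<in> V \<and> head e \<in> V \<and> tail e \<noteq> head e)"

definition zm :: "int \<Rightarrow> int set" where
  "zm m = {0..<m}"

definition is_boundary :: "int \<Rightarrow> 'v set \<Rightarrow> ('v \<Rightarrow> int) \<Rightarrow> bool" where
  "is_boundary m V \<beta> \<longleftrightarrow> (\<forall>v\<in>V. \<beta> v \<in> zm m) \<and> [(\<Sum>v\<in>V. \<beta> v) = 0] (mod m)"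

definition bd :: "'e set \<Rightarrow> ('e \<Rightarrow> 'v) \<Rightarrow> ('e \<Rightarrow> 'v) \<Rightarrow> ('e \<Rightarrow> int) \<Rightarrow> 'v \<Rightarrow> int" where
  "bd E tail head h v = (\<Sum>e\<in>{e\<in>E. tail e = v}. h e) - (\<Sum>e\<in>{e\<in>E. head e = v}. h e)"

text \<open>An orientation of the underlying undirected graph is given by ori :: 'e => bool:
  ori e = True keeps the direction tail e -> head e, ori e = False reverses it.\<close>
definition weighted_orientation ::
  "int \<Rightarrow> 'v set \<Rightarrow> 'e set \<Rightarrow> ('e \<Rightarrow> 'v) \<Rightarrow> ('e \<Rightarrow> 'v) \<Rightarrow> ('e \<Rightarrow> int) \<Rightarrow> ('v \<Rightarrow> int) \<Rightarrow> ('e \<Rightarrow> bool) \<Rightarrow> bool" where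
  "weighted_orientation m V E tail head f \<beta> ori \<longleftrightarrow>
     (\<forall>v\<in>V. [bd E (\<lambda>e. if ori e then tail e else head e) (\<lambda>e. if ori e then head e else tail e) f v = \<beta> v] (mod m))"

definition is_flow :: "int \<Rightarrow> 'v set \<Rightarrow> 'e set \<Rightarrow> ('e \<Rightarrow> 'v) \<Rightarrow> ('e \<Rightarrow> 'v) \<Rightarrow> ('v \<Rightarrow> int) \<Rightarrow> ('e \<Rightarrow> int) \<Rightarrow> bool" where
  "is_flow m V E tail head \<beta> g \<longleftrightarrow> (\<forall>e\<in>E. g e \<in> zm m) \<and> (\<forall>v\<in>V. [bd E tail head g v = \<beta> v] (mod m))"

end

theory Submission
  imports Defs
begin

text \<open>Since \<open>k + 1\<close> is the inverse of 2 modulo \<open>m = 2k + 1\<close>, every list \<open>L e = {a, b}\<close> can be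
  written as \<open>{c + d, c - d}\<close> with midpoint \<open>c = (a + b)(k + 1)\<close> and half-difference
  \<open>d = (a - b)(k + 1)\<close>, where \<open>d \<noteq> 0\<close> because \<open>a \<noteq> b\<close>. Choosing \<open>a\<close> or \<open>b\<close> on every arc thus
  amounts to choosing a sign of \<open>d\<close>, i.e. an orientation. A \<open>d\<close>-weighted orientation for the
  shifted boundary \<open>\<beta> - \<partial>c\<close> therefore yields the required flow.\<close>

lemma bd_eq_sum:
  assumes "finite E"
  shows "bd E t hh w v = (\<Sum>e\<in>E. (if t e = v then w e else 0) - (if hh e = v then w e else 0))"
  unfolding bd_def using assms by (simp add: sum.inter_filter sum_subtractf)

lemma bd_add: "bd E t hh (\<lambda>e. x e + y e) v = bd E t hh x v + bd E t hh y v"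
  unfolding bd_def by (simp add: sum.distrib)

lemma bd_cong:
  assumes "\<And>e. e \<in> E \<Longrightarrow> [h1 e = h2 e] (mod m)"
  shows "[bd E t hh h1 v = bd E t hh h2 v] (mod m)"
  unfolding bd_def using assms by (intro cong_diff cong_sum) auto

lemma sum_bd_eq_0:
  assumes "finite V" "finite E" "\<forall>e\<in>E. t e \<in> V \<and> hh e \<in> V"
  shows "(\<Sum>v\<in>V. bd E t hh h v) = 0"
proof -
  have "(\<Sum>v\<in>V. sum h {e\<in>E. t e = v}) = sum h E"
    by (rule sum.group) (use assms in auto)
  moreover have "(\<Sum>v\<in>V. sum h {e\<in>E. hh e = v}) = sum h E"
    by (rule sum.group) (use assms in auto)
  ultimately show ?thesis unfolding bd_def sum_subtractf by simp
qed

lemma bd_reorient: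
  assumes "finite E"
  shows "bd E (\<lambda>e. if ori e then t e else hh e) (\<lambda>e. if ori e then hh e else t e) f v
       = bd E t hh (\<lambda>e. if ori e then f e else - f e) v"
  unfolding bd_eq_sum[OF assms] by (rule sum.cong) auto

lemma is_boundary_shift:
  assumes "m > 0" "is_boundary m V \<beta>" "finite V" "finite E" "\<forall>e\<in>E. t e \<in> V \<and> hh e \<in> V"
  shows "is_boundary m V (\<lambda>v. (\<beta> v - bd E t hh c v) mod m)"
  unfolding is_boundary_def
proof
  show "\<forall>v\<in>V. (\<beta> v - bd E t hh c v) mod m \<in> zm m"
    using assms(1) by (simp add: zm_def)
  have "[(\<Sum>v\<in>V. (\<beta> v - bd E t hh c v) mod m) = (\<Sum>v\<in>V. \<beta> v - bd E t hh c v)] (mod m)"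
    by (intro cong_sum) (simp add: cong_def)
  also have "(\<Sum>v\<in>V. \<beta> v - bd E t hh c v) = (\<Sum>v\<in>V. \<beta> v)"
    using sum_bd_eq_0[OF assms(3-5)] by (simp add: sum_subtractf)
  also have "[\<dots> = 0] (mod m)"
    using assms(2) by (simp add: is_boundary_def)
  finally show "[(\<Sum>v\<in>V. (\<beta> v - bd E t hh c v) mod m) = 0] (mod m)" .
qed

lemma is_flow_of_weighted_orientation:
  assumes "finite E"
    and ori: "weighted_orientation m V E tail head f (\<lambda>v. (\<beta> v - bd E tail head c v) mod m) ori"
    and range: "\<forall>e\<in>E. g e \<in> zm m"
    and g: "\<And>e. e \<in> E \<Longrightarrow> [g e = c e + (if ori e then f e else - f e)] (mod m)"
  shows "is_flow m V E tail head \<beta> g"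
  unfolding is_flow_def
proof (intro conjI range ballI)
  fix v assume "v \<in> V"
  let ?s = "\<lambda>e. if ori e then f e else - f e"
  have "[bd E tail head g v = bd E tail head (\<lambda>e. c e + ?s e) v] (mod m)"
    using g by (rule bd_cong)
  also have "bd E tail head (\<lambda>e. c e + ?s e) v = bd E tail head c v + bd E tail head ?s v"
    by (rule bd_add)
  also have "bd E tail head ?s v
      = bd E (\<lambda>e. if ori e then tail e else head e) (\<lambda>e. if ori e then head e else tail e) f v"
    by (rule bd_reorient[OF \<open>finite E\<close>, symmetric])
  also have "[bd E tail head c v + \<dots> = bd E tail head c v + (\<beta> v - bd E tail head c v) mod m] (mod m)"
    using ori \<open>v \<in> V\<close> unfolding weighted_orientation_def by (intro cong_add) auto
  also have "[bd E tail head c v + (\<beta> v - bd E tail head c v) mod m = \<beta> v] (mod m)"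
    by (simp add: cong_def mod_add_right_eq)
  finally show "[bd E tail head g v = \<beta> v] (mod m)" .
qed

lemma cong_select_midpoint_half_diff:
  fixes a b f h m :: int
  assumes half: "[2 * h = 1] (mod m)" and f: "[f = (a - b) * h] (mod m)"
  shows "[(if s then a else b) = (a + b) * h + (if s then f else - f)] (mod m)"
proof -
  have "[(a + b) * h + (if s then f else - f)
      = (a + b) * h + (if s then (a - b) * h else - ((a - b) * h))] (mod m)"
    using f by (intro cong_add cong_refl) (simp add: cong_minus_minus_iff)
  also have "(a + b) * h + (if s then (a - b) * h else - ((a - b) * h))
      = (if s then a else b) * (2 * h)"
    by (simp add: algebra_simps)
  also have "[\<dots> = (if s then a else b) * 1] (mod m)"
    using half by (rule cong_scalar_left)
  finally show ?thesis by (simp add: cong_sym_eq)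
qed

lemma half_diff_not_cong_0:
  fixes a b m :: int
  assumes "[2 * h = 1] (mod m)" "a \<in> zm m" "b \<in> zm m" "a \<noteq> b"
  shows "\<not> [(a - b) * h = 0] (mod m)"
proof
  assume "[(a - b) * h = 0] (mod m)"
  have "[a - b = (a - b) * (2 * h)] (mod m)"
    using cong_scalar_left[OF assms(1), of "a - b"] by (simp add: cong_sym)
  also have "(a - b) * (2 * h) = 2 * ((a - b) * h)" by simp
  also have "[2 * ((a - b) * h) = 2 * 0] (mod m)"
    using \<open>[(a - b) * h = 0] (mod m)\<close> by (rule cong_scalar_left)
  finally have "[a = b] (mod m)" by (simp add: cong_diff_iff_cong_0)
  with assms(2-4) show False by (simp add: zm_def cong_def)
qed

lemma two_mult_succ_cong_1: "[2 * (k + 1) = 1] (mod 2 * k + 1)" for k :: int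
proof -
  have "2 * (k + 1) = 1 + (2 * k + 1)" by simp
  then show ?thesis by (simp only: cong_def mod_add_self2)
qed

theorem lemma9:
  fixes k :: int and V :: "'v set" and E :: "'e set" and tail head :: "'e \<Rightarrow> 'v"
    and L :: "'e \<Rightarrow> int set"
  assumes "k \<ge> 1"
    and "multidigraph V E tail head"
    and "\<forall>f \<beta>. (\<forall>e\<in>E. f e \<in> zm (2*k+1) - {0}) \<and> is_boundary (2*k+1) V \<beta> \<longrightarrow>
           (\<exists>ori. weighted_orientation (2*k+1) V E tail head f \<beta> ori)"
    and "\<forall>e\<in>E. L e \<subseteq> zm (2*k+1) \<and> card (L e) = 2"
  shows "\<forall>\<beta>. is_boundary (2*k+1) V \<beta> \<longrightarrow>
           (\<exists>g. is_flow (2*k+1) V E tail head \<beta> g \<and> (\<forall>e\<in>E. g e \<in> L e))"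
proof (intro allI impI)
  fix \<beta> assume \<beta>: "is_boundary (2*k+1) V \<beta>"
  define m where "m = 2*k+1"
  have "m > 0" using assms(1) by (simp add: m_def)
  have half: "[2 * (k + 1) = 1] (mod m)" unfolding m_def by (rule two_mult_succ_cong_1)
  have fin: "finite V" "finite E" and ends: "\<forall>e\<in>E. tail e \<in> V \<and> head e \<in> V"
    using assms(2) unfolding multidigraph_def by auto
  obtain a b where ab: "\<forall>e\<in>E. L e = {a e, b e} \<and> a e \<noteq> b e"
    using assms(4) unfolding card_2_iff by metis
  then have ab_zm: "\<forall>e\<in>E. a e \<in> zm m \<and> b e \<in> zm m"
    using assms(4) by (auto simp: m_def)
  define c where "c e = (a e + b e) * (k + 1)" for e
  define f where "f e = ((a e - b e) * (k + 1)) mod m" for e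
  have "\<forall>e\<in>E. f e \<in> zm m - {0}"
    using half_diff_not_cong_0[OF half] ab ab_zm \<open>m > 0\<close> by (auto simp: f_def zm_def cong_def)
  moreover have "is_boundary m V (\<lambda>v. (\<beta> v - bd E tail head c v) mod m)"
    using is_boundary_shift[OF \<open>m > 0\<close> \<beta>[folded m_def] fin ends] .
  ultimately obtain ori where
    ori: "weighted_orientation m V E tail head f (\<lambda>v. (\<beta> v - bd E tail head c v) mod m) ori"
    using assms(3)[folded m_def] by blast
  define g where "g e = (if ori e then a e else b e)" for e
  have "[f e = (a e - b e) * (k + 1)] (mod m)" for e
    by (simp add: f_def cong_def)
  then have g_cong: "[g e = c e + (if ori e then f e else - f e)] (mod m)" for e
    unfolding g_def c_def by (rule cong_select_midpoint_half_diff[OF half])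
  have "is_flow m V E tail head \<beta> g"
    using ab_zm by (intro is_flow_of_weighted_orientation[OF fin(2) ori _ g_cong]) (auto simp: g_def)
  moreover have "\<forall>e\<in>E. g e \<in> L e" using ab by (simp add: g_def)
  ultimately show "\<exists>g. is_flow (2*k+1) V E tail head \<beta> g \<and> (\<forall>e\<in>E. g e \<in> L e)"
    unfolding m_def by blast
qed

end
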